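(* Let $f$ be a $k$-term DNF over $x_1,\dots,x_n$ and let $\mathcal{F}$ be a set of eligible pairs that is fully expressive for $f$. Then $f$ can be written as an $\mathcal{F}$-augmented PTF of degree at most $d_{\max}=O(\sqrt{k}\log k)$ and weight at most $W_{\max}=2^{O(\sqrt{k}\log^2 k)}$.
   Context: Variables $x_i$ and terms take values in $\{0,1\}$; terms are sets of literals. An eligible pair is $(T',R_{T'})$ where $T'$ is a term (candidate stem) and $R_{T'}\subseteq[n]$ is disjoint from the variables occurring in $T'$. For a set $\mathcal{F}$ of eligible pairs (always assumed to contain a pair whose term is the empty term, i.e. the constant $1$), an $\mathcal{F}$-augmented monomial of degree $d$ is a product $T'\cdot\prod_{i\in S}x_i$ with $(T',R_{T'})\in\mathcal{F}$, $S\subseteq R_{T'}$ and $|S|\le d$. An $\mathcal{F}$-augmented PTF of degree $d$ and weight $W$ is a function $\mathbf{1}[p(x)\ge\theta]$ where $p$ is a linear combination, with integer coefficients whose absolute values sum to at most $W$, of $\mathcal{F}$-augmented monomials of degree at most $d$. A term $T'$ is a valid stem of a term $T$ if $T'\subseteq T$ and $|T\setminus T'|\le 2k$. $\mathcal{F}$ is fully expressive for $f$ if for every term $T_i$ of $f$ there is $(T',R_{T'})\in\mathcal{F}$ such that $T'$ is a valid stem of $T_i$ and every variable of $T_i\setminus T'$ lies in $R_{T'}$. *)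

theory Defs
  imports Complex_Main
begin

text \<open>Variables are indexed by natural numbers; the variables of an n-variable
  problem are 0,...,n-1.  A literal (i,b) is satisfied by x iff x i = b,
  i.e. (i,True) is the literal x_i and (i,False) is its negation.\<close>

type_synonym lit = "nat \<times> bool"
type_synonym trm = "lit set"

definition eval_term :: "trm \<Rightarrow> (nat \<Rightarrow> bool) \<Rightarrow> bool" where
  "eval_term T x \<longleftrightarrow> (\<forall>(i, b) \<in> T. x i = b)"

definition vars :: "trm \<Rightarrow> nat set" where
  "vars T = fst ` T"

definition is_term :: "nat \<Rightarrow> trm \<Rightarrow> bool" where
  "is_term n T \<longleftrightarrow> finite T \<and> vars T \<subseteq> {..<n}"

text \<open>A DNF given by its list of terms (a k-term DNF has a list of length k).\<close>
definition dnf_eval :: "trm list \<Rightarrow> (nat \<Rightarrow> bool) \<Rightarrow> bool" where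
  "dnf_eval ts x \<longleftrightarrow> (\<exists>T \<in> set ts. eval_term T x)"

definition eligible :: "nat \<Rightarrow> trm \<times> nat set \<Rightarrow> bool" where
  "eligible n p \<longleftrightarrow> is_term n (fst p) \<and> snd p \<subseteq> {..<n} \<and> snd p \<inter> vars (fst p) = {}"

definition valid_stem :: "nat \<Rightarrow> trm \<Rightarrow> trm \<Rightarrow> bool" where
  "valid_stem k T' T \<longleftrightarrow> T' \<subseteq> T \<and> card (T - T') \<le> 2 * k"

definition fully_expressive :: "nat \<Rightarrow> (trm \<times> nat set) set \<Rightarrow> trm list \<Rightarrow> bool" where
  "fully_expressive k F ts \<longleftrightarrow>
     (\<forall>T \<in> set ts. \<exists>(T', R) \<in> F. valid_stem k T' T \<and> vars (T - T') \<subseteq> R)"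

definition aug_mono_val :: "trm \<Rightarrow> nat set \<Rightarrow> (nat \<Rightarrow> bool) \<Rightarrow> int" where
  "aug_mono_val T' S x = (if eval_term T' x then 1 else 0) * (\<Prod>i\<in>S. if x i then 1 else 0)"

definition aug_PTF :: "(trm \<times> nat set) set \<Rightarrow> nat \<Rightarrow> real \<Rightarrow> ((nat \<Rightarrow> bool) \<Rightarrow> bool) \<Rightarrow> bool" where
  "aug_PTF F d W f \<longleftrightarrow>
     (\<exists>(M :: (trm \<times> nat set \<times> nat set) set) (c :: trm \<times> nat set \<times> nat set \<Rightarrow> int) (\<theta> :: real).
        finite M \<and>
        (\<forall>(T', R, S) \<in> M. (T', R) \<in> F \<and> S \<subseteq> R \<and> card S \<le> d) \<and>
        real_of_int (\<Sum>m\<in>M. \<bar>c m\<bar>) \<le> W \<and>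
        (\<forall>x. f x \<longleftrightarrow>
              real_of_int (\<Sum>(T', R, S)\<in>M. c (T', R, S) * aug_mono_val T' S x) \<ge> \<theta>))"

end

theory Submission
  imports Defs
begin

text \<open>
  Full expressiveness splits every term T into a stem (T', R) in F and a list ls of at most 2k
  literals over R such that T is the union of T' and ls.  Put N = 2k and let Y = N - 2 |ls| + 2
  + 2 c, where c counts the satisfied literals of ls: Y = N + 2 if ls is satisfied and |Y| <= N
  otherwise.  The Chebyshev polynomial T_r, r = ceil(sqrt(2k)), is bounded by 1 on [-1, 1] but
  T_r(1 + 2/N) >= 1 + 2 r^2/N >= 2.  Hence the integer polynomial (N^r T_r(Y/N))^s, s =
  ceil(log2(2k)), of degree rs has absolute value at most N^(rs) unless ls is satisfied, where
  it is at least 2^s N^(rs) >= 2k N^(rs).  Multiplied by the stem T' it becomes a combination of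
  F-augmented monomials, and the sum over the k terms exceeds k N^(rs) exactly when some term is
  satisfied.  Its weight is at most k (48k)^(rs) = 2^O(sqrt(k) log^2 k).
\<close>

section \<open>Multilinear polynomials over Boolean variables\<close>

text \<open>A polynomial is a list of (coefficient, monomial) pairs, the monomial S standing for the
  product of the x_i with i in S; repeated monomials are allowed.\<close>

type_synonym bpoly = "(int \<times> nat set) list"

definition mono_val :: "nat set \<Rightarrow> (nat \<Rightarrow> bool) \<Rightarrow> int" where
  "mono_val S x = (if \<forall>i\<in>S. x i then 1 else 0)"

definition bpoly_eval :: "bpoly \<Rightarrow> (nat \<Rightarrow> bool) \<Rightarrow> int" where
  "bpoly_eval p x = (\<Sum>(c, S)\<leftarrow>p. c * mono_val S x)"

definition bpoly_weight :: "bpoly \<Rightarrow> int" where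
  "bpoly_weight p = (\<Sum>(c, S)\<leftarrow>p. \<bar>c\<bar>)"

definition bpoly_within :: "nat set \<Rightarrow> nat \<Rightarrow> bpoly \<Rightarrow> bool" where
  "bpoly_within V d p \<longleftrightarrow> (\<forall>(c, S)\<in>set p. S \<subseteq> V \<and> card S \<le> d)"

definition bpoly_const :: "int \<Rightarrow> bpoly" where
  "bpoly_const a = [(a, {})]"

definition bpoly_smult :: "int \<Rightarrow> bpoly \<Rightarrow> bpoly" where
  "bpoly_smult a p = map (\<lambda>(c, S). (a * c, S)) p"

definition bpoly_mult :: "bpoly \<Rightarrow> bpoly \<Rightarrow> bpoly" where
  "bpoly_mult p q = concat (map (\<lambda>(c, S). map (\<lambda>(c', S'). (c * c', S \<union> S')) q) p)"

primrec bpoly_power :: "bpoly \<Rightarrow> nat \<Rightarrow> bpoly" where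
  "bpoly_power p 0 = bpoly_const 1"
| "bpoly_power p (Suc s) = bpoly_mult p (bpoly_power p s)"

lemma bpoly_eval_simps [simp]:
  "bpoly_eval [] x = 0"
  "bpoly_eval ((c, S) # p) x = c * mono_val S x + bpoly_eval p x"
  "bpoly_eval (p @ q) x = bpoly_eval p x + bpoly_eval q x"
  by (simp_all add: bpoly_eval_def)

lemma bpoly_weight_simps [simp]:
  "bpoly_weight [] = 0"
  "bpoly_weight ((c, S) # p) = \<bar>c\<bar> + bpoly_weight p"
  "bpoly_weight (p @ q) = bpoly_weight p + bpoly_weight q"
  by (simp_all add: bpoly_weight_def)

lemma bpoly_weight_nonneg: "0 \<le> bpoly_weight p"
  by (induction p) auto

lemma bpoly_within_append:
  "bpoly_within V d p \<Longrightarrow> bpoly_within V d q \<Longrightarrow> bpoly_within V d (p @ q)"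
  by (auto simp: bpoly_within_def)

lemma bpoly_within_mono: "bpoly_within V d p \<Longrightarrow> d \<le> d' \<Longrightarrow> bpoly_within V d' p"
  by (fastforce simp: bpoly_within_def)

lemma bpoly_eval_const [simp]: "bpoly_eval (bpoly_const a) x = a"
  by (simp add: bpoly_const_def mono_val_def)

lemma bpoly_weight_const [simp]: "bpoly_weight (bpoly_const a) = \<bar>a\<bar>"
  by (simp add: bpoly_const_def)

lemma bpoly_within_const: "bpoly_within V d (bpoly_const a)"
  by (simp add: bpoly_const_def bpoly_within_def)

lemma bpoly_eval_smult [simp]: "bpoly_eval (bpoly_smult a p) x = a * bpoly_eval p x"
  by (induction p) (auto simp: bpoly_smult_def algebra_simps)

lemma bpoly_weight_smult [simp]: "bpoly_weight (bpoly_smult a p) = \<bar>a\<bar> * bpoly_weight p"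
  by (induction p) (auto simp: bpoly_smult_def algebra_simps abs_mult)

lemma bpoly_within_smult: "bpoly_within V d p \<Longrightarrow> bpoly_within V d (bpoly_smult a p)"
  by (auto simp: bpoly_within_def bpoly_smult_def)

lemma mono_val_Un: "mono_val (S \<union> S') x = mono_val S x * mono_val S' x"
  by (auto simp: mono_val_def)

lemma bpoly_eval_mult [simp]: "bpoly_eval (bpoly_mult p q) x = bpoly_eval p x * bpoly_eval q x"
proof (induction p)
  case (Cons cS p)
  obtain c S where [simp]: "cS = (c, S)" by force
  have "bpoly_eval (map (\<lambda>(c', S'). (c * c', S \<union> S')) q) x = c * mono_val S x * bpoly_eval q x"
    by (induction q) (auto simp: mono_val_Un algebra_simps)
  with Cons show ?case by (simp add: bpoly_mult_def algebra_simps)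
qed (simp add: bpoly_mult_def)

lemma bpoly_weight_mult [simp]: "bpoly_weight (bpoly_mult p q) = bpoly_weight p * bpoly_weight q"
proof (induction p)
  case (Cons cS p)
  obtain c S where [simp]: "cS = (c, S)" by force
  have "bpoly_weight (map (\<lambda>(c', S'). (c * c', S \<union> S')) q) = \<bar>c\<bar> * bpoly_weight q"
    by (induction q) (auto simp: abs_mult algebra_simps)
  with Cons show ?case by (simp add: bpoly_mult_def algebra_simps)
qed (simp add: bpoly_mult_def)

lemma bpoly_within_mult:
  assumes "bpoly_within V d p" "bpoly_within V d' q"
  shows "bpoly_within V (d + d') (bpoly_mult p q)"
  using assms card_Un_le unfolding bpoly_within_def bpoly_mult_def by (fastforce intro: order_trans)

lemma bpoly_eval_power [simp]: "bpoly_eval (bpoly_power p s) x = bpoly_eval p x ^ s"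
  by (induction s) auto

lemma bpoly_weight_power [simp]: "bpoly_weight (bpoly_power p s) = bpoly_weight p ^ s"
  by (induction s) auto

lemma bpoly_within_power: "bpoly_within V d p \<Longrightarrow> bpoly_within V (d * s) (bpoly_power p s)"
  by (induction s) (auto simp: bpoly_within_const intro: bpoly_within_mult)

section \<open>Chebyshev polynomials\<close>

fun chebyshev :: "nat \<Rightarrow> real \<Rightarrow> real" where
  "chebyshev 0 x = 1"
| "chebyshev (Suc 0) x = x"
| "chebyshev (Suc (Suc r)) x = 2 * x * chebyshev (Suc r) x - chebyshev r x"

lemma chebyshev_cos: "chebyshev r (cos t) = cos (real r * t)"
proof (induction r "cos t" rule: chebyshev.induct)
  case (3 r)
  have "cos ((real r + 2) * t) + cos (real r * t) = 2 * cos t * cos ((real r + 1) * t)"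
    using cos_add[of "(real r + 1) * t" t] cos_diff[of "(real r + 1) * t" t]
    by (simp add: algebra_simps)
  with 3 show ?case by (simp add: algebra_simps)
qed simp_all

lemma abs_chebyshev_le_1: "\<bar>x\<bar> \<le> 1 \<Longrightarrow> \<bar>chebyshev r x\<bar> \<le> 1"
  by (metis abs_cos_le_one chebyshev_cos cos_arccos_abs)

lemma chebyshev_one_plus_bounds:
  assumes "0 \<le> e"
  shows "1 + (real r)\<^sup>2 * e \<le> chebyshev r (1 + e)
    \<and> (2 * real r + 1) * e \<le> chebyshev (Suc r) (1 + e) - chebyshev r (1 + e)"
proof (induction r)
  case (Suc r)
  let ?b = "chebyshev (Suc r) (1 + e)"
  have b: "1 + (real (Suc r))\<^sup>2 * e \<le> ?b"
    using Suc by (simp add: power2_eq_square algebra_simps)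
  then have "2 * e \<le> 2 * e * ?b"
    using assms by (simp add: mult_le_cancel_left1 order_trans[OF _ b])
  then show ?case
    using Suc b by (simp add: algebra_simps)
qed simp

lemma chebyshev_one_plus_ge: "0 \<le> e \<Longrightarrow> 1 + (real r)\<^sup>2 * e \<le> chebyshev r (1 + e)"
  using chebyshev_one_plus_bounds by blast

text \<open>The homogenised recurrence for N^r T_r(Y/N), which keeps all coefficients integral.\<close>

fun chebyshev_bpoly :: "int \<Rightarrow> bpoly \<Rightarrow> nat \<Rightarrow> bpoly" where
  "chebyshev_bpoly N Y 0 = bpoly_const 1"
| "chebyshev_bpoly N Y (Suc 0) = Y"
| "chebyshev_bpoly N Y (Suc (Suc r)) =
     bpoly_mult (bpoly_smult 2 Y) (chebyshev_bpoly N Y (Suc r)) @ bpoly_smult (- N\<^sup>2) (chebyshev_bpoly N Y r)"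

lemma chebyshev_bpoly_eval:
  assumes "N \<noteq> 0"
  shows "bpoly_eval (chebyshev_bpoly N Y r) x = N ^ r * chebyshev r (bpoly_eval Y x / N)"
  using assms
  by (induction N Y r rule: chebyshev_bpoly.induct) (simp_all add: field_simps power2_eq_square)

lemma abs_chebyshev_bpoly_eval_le:
  assumes "0 < N" "\<bar>bpoly_eval Y x\<bar> \<le> N"
  shows "\<bar>bpoly_eval (chebyshev_bpoly N Y r) x\<bar> \<le> N ^ r"
proof -
  have "\<bar>chebyshev r (bpoly_eval Y x / N)\<bar> \<le> 1"
    using assms by (intro abs_chebyshev_le_1) (simp add: abs_divide)
  then have "\<bar>real_of_int N ^ r * chebyshev r (bpoly_eval Y x / N)\<bar> \<le> N ^ r"
    using assms by (simp add: abs_mult mult_left_le)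
  then show ?thesis
    using chebyshev_bpoly_eval[of N Y r x] assms by linarith
qed

lemma chebyshev_bpoly_eval_ge:
  assumes "0 < N" "N \<le> (int r)\<^sup>2" "bpoly_eval Y x = N + 2"
  shows "2 * N ^ r \<le> bpoly_eval (chebyshev_bpoly N Y r) x"
proof -
  have "1 + (real r)\<^sup>2 * (2 / N) \<le> chebyshev r (1 + 2 / N)"
    using assms by (intro chebyshev_one_plus_ge) simp
  moreover have "real_of_int N \<le> (real r)\<^sup>2"
    using assms(2) by (metis of_int_le_iff of_int_of_nat_eq of_int_power)
  then have "2 \<le> (real r)\<^sup>2 * (2 / N)"
    using assms by (simp add: field_simps)
  ultimately have "2 * real_of_int N ^ r \<le> N ^ r * chebyshev r (1 + 2 / N)"
    using assms by (simp add: mult_left_mono)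
  also have "\<dots> = bpoly_eval (chebyshev_bpoly N Y r) x"
    using chebyshev_bpoly_eval[of N Y r x] assms by (simp add: add_divide_distrib)
  finally show ?thesis
    by (metis of_int_le_iff of_int_mult of_int_numeral of_int_power)
qed

lemma chebyshev_bpoly_weight:
  assumes "bpoly_weight Y \<le> a" "0 \<le> N" "N \<le> a"
  shows "bpoly_weight (chebyshev_bpoly N Y r) \<le> (3 * a) ^ r"
  using assms
proof (induction N Y r rule: chebyshev_bpoly.induct)
  case (3 N Y r)
  have a: "0 \<le> a"
    using 3 by simp
  have "bpoly_weight (chebyshev_bpoly N Y (Suc (Suc r)))
      = 2 * bpoly_weight Y * bpoly_weight (chebyshev_bpoly N Y (Suc r))
        + N\<^sup>2 * bpoly_weight (chebyshev_bpoly N Y r)"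
    by simp
  also have "\<dots> \<le> 2 * a * (3 * a) ^ Suc r + a\<^sup>2 * (3 * a) ^ r"
    using 3 bpoly_weight_nonneg
    by (intro add_mono mult_mono power_mono) (simp_all add: mult_left_mono)
  also have "\<dots> \<le> (3 * a) ^ Suc (Suc r)"
    using a by (simp add: power2_eq_square algebra_simps)
  finally show ?case .
qed simp_all

lemma chebyshev_bpoly_within:
  "bpoly_within V 1 Y \<Longrightarrow> bpoly_within V r (chebyshev_bpoly N Y r)"
proof (induction N Y r rule: chebyshev_bpoly.induct)
  case (3 N Y r)
  then have "bpoly_within V (1 + Suc r) (bpoly_mult (bpoly_smult 2 Y) (chebyshev_bpoly N Y (Suc r)))"
    by (intro bpoly_within_mult bpoly_within_smult) auto
  moreover have "bpoly_within V (Suc (Suc r)) (bpoly_smult (- N\<^sup>2) (chebyshev_bpoly N Y r))"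
    using 3 by (auto intro: bpoly_within_smult bpoly_within_mono)
  ultimately show ?case
    by (simp add: bpoly_within_append)
qed (simp_all add: bpoly_within_const)

section \<open>Polynomials detecting a term\<close>

definition lit_holds :: "lit \<Rightarrow> (nat \<Rightarrow> bool) \<Rightarrow> bool" where
  "lit_holds l x \<longleftrightarrow> x (fst l) = snd l"

lemma eval_term_iff_lit_holds: "eval_term T x \<longleftrightarrow> (\<forall>l\<in>T. lit_holds l x)"
  by (auto simp: eval_term_def lit_holds_def)

definition lit_bpoly :: "lit \<Rightarrow> bpoly" where
  "lit_bpoly l = (if snd l then [(1, {fst l})] else [(1, {}), (-1, {fst l})])"

definition count_bpoly :: "lit list \<Rightarrow> bpoly" where
  "count_bpoly ls = concat (map lit_bpoly ls)"

lemma count_bpoly_eval: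
  "bpoly_eval (count_bpoly ls) x = int (length (filter (\<lambda>l. lit_holds l x) ls))"
  by (induction ls) (auto simp: count_bpoly_def lit_bpoly_def lit_holds_def mono_val_def)

lemma count_bpoly_weight: "bpoly_weight (count_bpoly ls) \<le> 2 * int (length ls)"
  by (induction ls) (auto simp: count_bpoly_def lit_bpoly_def)

lemma count_bpoly_within: "fst ` set ls \<subseteq> V \<Longrightarrow> bpoly_within V 1 (count_bpoly ls)"
  by (induction ls) (auto simp: count_bpoly_def lit_bpoly_def bpoly_within_def)

definition shifted_count_bpoly :: "int \<Rightarrow> lit list \<Rightarrow> bpoly" where
  "shifted_count_bpoly N ls = bpoly_const (N - 2 * int (length ls) + 2) @ bpoly_smult 2 (count_bpoly ls)"

lemma shifted_count_bpoly_eval_all: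
  "\<forall>l\<in>set ls. lit_holds l x \<Longrightarrow> bpoly_eval (shifted_count_bpoly N ls) x = N + 2"
  by (simp add: shifted_count_bpoly_def count_bpoly_eval)

lemma abs_shifted_count_bpoly_eval_le:
  assumes "int (length ls) \<le> N + 1" "\<not> (\<forall>l\<in>set ls. lit_holds l x)"
  shows "\<bar>bpoly_eval (shifted_count_bpoly N ls) x\<bar> \<le> N"
proof -
  have "length (filter (\<lambda>l. lit_holds l x) ls) < length ls"
    using assms(2) by (auto intro: length_filter_less)
  with assms(1) show ?thesis
    by (simp add: shifted_count_bpoly_def count_bpoly_eval)
qed

lemma shifted_count_bpoly_weight:
  assumes "2 \<le> N" "int (length ls) \<le> N"
  shows "bpoly_weight (shifted_count_bpoly N ls) \<le> 8 * N"
  using assms count_bpoly_weight[of ls] by (simp add: shifted_count_bpoly_def)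

definition term_detector :: "int \<Rightarrow> nat \<Rightarrow> nat \<Rightarrow> lit list \<Rightarrow> bpoly" where
  "term_detector N r s ls = bpoly_power (chebyshev_bpoly N (shifted_count_bpoly N ls) r) s"

lemma term_detector_eval_ge:
  assumes "0 < N" "N \<le> (int r)\<^sup>2" "\<forall>l\<in>set ls. lit_holds l x"
  shows "2 ^ s * N ^ (r * s) \<le> bpoly_eval (term_detector N r s ls) x"
proof -
  have "2 * N ^ r \<le> bpoly_eval (chebyshev_bpoly N (shifted_count_bpoly N ls) r) x"
    using assms by (intro chebyshev_bpoly_eval_ge shifted_count_bpoly_eval_all)
  then have "(2 * N ^ r) ^ s \<le> bpoly_eval (chebyshev_bpoly N (shifted_count_bpoly N ls) r) x ^ s"
    using assms by (intro power_mono) simp_all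
  then show ?thesis
    by (simp add: term_detector_def power_mult_distrib power_mult)
qed

lemma abs_term_detector_eval_le:
  assumes "0 < N" "int (length ls) \<le> N + 1" "\<not> (\<forall>l\<in>set ls. lit_holds l x)"
  shows "\<bar>bpoly_eval (term_detector N r s ls) x\<bar> \<le> N ^ (r * s)"
proof -
  have "\<bar>bpoly_eval (chebyshev_bpoly N (shifted_count_bpoly N ls) r) x\<bar> \<le> N ^ r"
    using assms by (intro abs_chebyshev_bpoly_eval_le abs_shifted_count_bpoly_eval_le)
  then show ?thesis
    by (simp add: term_detector_def power_abs power_mult power_mono)
qed

lemma term_detector_weight:
  assumes "2 \<le> N" "int (length ls) \<le> N"
  shows "bpoly_weight (term_detector N r s ls) \<le> (24 * N) ^ (r * s)"
proof -
  have "bpoly_weight (chebyshev_bpoly N (shifted_count_bpoly N ls) r) \<le> (3 * (8 * N)) ^ r"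
    using assms by (intro chebyshev_bpoly_weight shifted_count_bpoly_weight) simp_all
  then show ?thesis
    by (simp add: term_detector_def power_mult power_mono bpoly_weight_nonneg)
qed

lemma term_detector_within:
  "fst ` set ls \<subseteq> V \<Longrightarrow> bpoly_within V (r * s) (term_detector N r s ls)"
  unfolding term_detector_def shifted_count_bpoly_def
  by (intro bpoly_within_power chebyshev_bpoly_within bpoly_within_append bpoly_within_const
      bpoly_within_smult count_bpoly_within)

section \<open>Augmented threshold functions\<close>

lemma sum_collected_coeffs:
  fixes L :: "(int \<times> 'a) list"
  assumes "finite M" "snd ` set L \<subseteq> M"
  shows "(\<Sum>m\<in>M. (\<Sum>(c, m')\<leftarrow>L. if m' = m then c else 0) * v m) = (\<Sum>(c, m)\<leftarrow>L. c * v m)"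
  using assms(2)
proof (induction L)
  case (Cons cm L)
  obtain c m0 where [simp]: "cm = (c, m0)" by force
  have "m0 \<in> M"
    using Cons.prems by simp
  have "(\<Sum>m\<in>M. (if m0 = m then c else 0) * v m) = (\<Sum>m\<in>M. if m0 = m then c * v m else 0)"
    by (rule sum.cong) auto
  also have "\<dots> = c * v m0"
    using assms(1) \<open>m0 \<in> M\<close> by simp
  finally have "(\<Sum>m\<in>M. (if m0 = m then c else 0) * v m) = c * v m0" .
  with Cons show ?case
    by (simp add: distrib_right sum.distrib)
qed simp

lemma sum_abs_collected_coeffs_le:
  fixes L :: "(int \<times> 'a) list"
  assumes "finite M"
  shows "(\<Sum>m\<in>M. \<bar>\<Sum>(c, m')\<leftarrow>L. if m' = m then c else 0\<bar>) \<le> (\<Sum>(c, m)\<leftarrow>L. \<bar>c\<bar>)"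
proof (induction L)
  case (Cons cm L)
  obtain c m0 where [simp]: "cm = (c, m0)" by force
  have "(\<Sum>m\<in>M. \<bar>\<Sum>(c, m')\<leftarrow>cm # L. if m' = m then c else 0\<bar>)
      \<le> (\<Sum>m\<in>M. (if m0 = m then \<bar>c\<bar> else 0)) + (\<Sum>m\<in>M. \<bar>\<Sum>(c, m')\<leftarrow>L. if m' = m then c else 0\<bar>)"
    by (simp add: abs_triangle_ineq sum_mono flip: sum.distrib)
  also have "(\<Sum>m\<in>M. (if m0 = m then \<bar>c\<bar> else 0)) \<le> \<bar>c\<bar>"
    using assms by simp
  finally show ?case
    using Cons by simp
qed simp

type_synonym aug_poly = "(int \<times> trm \<times> nat set \<times> nat set) list"

lemma aug_PTF_of_list:
  fixes L :: aug_poly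
  assumes monomials: "\<forall>(c, T', R, S)\<in>set L. (T', R) \<in> F \<and> S \<subseteq> R \<and> card S \<le> d"
    and weight: "real_of_int (\<Sum>(c, m)\<leftarrow>L. \<bar>c\<bar>) \<le> W"
    and threshold: "\<forall>x. f x \<longleftrightarrow> \<theta> \<le> real_of_int (\<Sum>(c, T', R, S)\<leftarrow>L. c * aug_mono_val T' S x)"
  shows "aug_PTF F d W f"
  unfolding aug_PTF_def
proof (intro exI conjI)
  define coeff where "coeff m = (\<Sum>(c, m')\<leftarrow>L. if m' = m then c else 0)" for m
  have fin: "finite (snd ` set L)"
    by simp
  show "\<forall>(T', R, S)\<in>snd ` set L. (T', R) \<in> F \<and> S \<subseteq> R \<and> card S \<le> d"
    using monomials by fastforce
  show "real_of_int (\<Sum>m\<in>snd ` set L. \<bar>coeff m\<bar>) \<le> W"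
    using sum_abs_collected_coeffs_le[OF fin, of L] weight unfolding coeff_def by linarith
  have "(\<Sum>(T', R, S)\<in>snd ` set L. coeff (T', R, S) * aug_mono_val T' S x)
      = (\<Sum>(c, T', R, S)\<leftarrow>L. c * aug_mono_val T' S x)" for x
    using sum_collected_coeffs[OF fin, of L "\<lambda>(T', R, S). aug_mono_val T' S x"]
    unfolding coeff_def by (simp add: case_prod_unfold)
  then show "\<forall>x. f x \<longleftrightarrow> \<theta> \<le> real_of_int (\<Sum>(T', R, S)\<in>snd ` set L. coeff (T', R, S) * aug_mono_val T' S x)"
    using threshold by simp
qed simp

definition bpoly_augment :: "trm \<Rightarrow> nat set \<Rightarrow> bpoly \<Rightarrow> aug_poly" where
  "bpoly_augment T' R p = map (\<lambda>(c, S). (c, T', R, S)) p"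

lemma aug_mono_val_eq: "finite S \<Longrightarrow> aug_mono_val T' S x = (if eval_term T' x then mono_val S x else 0)"
  by (induction S rule: finite_induct) (auto simp: aug_mono_val_def mono_val_def)

lemma bpoly_augment_eval:
  assumes "bpoly_within R d p" "finite R"
  shows "(\<Sum>(c, T'', R', S)\<leftarrow>bpoly_augment T' R p. c * aug_mono_val T'' S x)
    = (if eval_term T' x then bpoly_eval p x else 0)"
  using assms(1)
proof (induction p)
  case (Cons cS p)
  obtain c S where [simp]: "cS = (c, S)" by force
  have "finite S"
    using Cons.prems assms(2) by (auto simp: bpoly_within_def intro: finite_subset)
  moreover have "bpoly_within R d p"
    using Cons.prems by (simp add: bpoly_within_def)
  ultimately show ?case
    using Cons.IH by (simp add: bpoly_augment_def aug_mono_val_eq)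
qed (simp add: bpoly_augment_def)

lemma bpoly_augment_weight: "(\<Sum>(c, m)\<leftarrow>bpoly_augment T' R p. \<bar>c\<bar>) = bpoly_weight p"
  by (induction p) (auto simp: bpoly_augment_def)

lemma bpoly_augment_memD:
  assumes "(c, T'', R', S) \<in> set (bpoly_augment T' R p)" "bpoly_within R d p"
  shows "T'' = T' \<and> R' = R \<and> S \<subseteq> R \<and> card S \<le> d"
  using assms by (auto simp: bpoly_augment_def bpoly_within_def)

lemma dominant_summand_threshold:
  fixes v :: "'a \<Rightarrow> int"
  assumes B: "1 \<le> B"
    and good: "\<And>t. t \<in> set ts \<Longrightarrow> P t \<Longrightarrow> 2 * int (length ts) * B \<le> v t"
    and bad: "\<And>t. t \<in> set ts \<Longrightarrow> \<not> P t \<Longrightarrow> \<bar>v t\<bar> \<le> B"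
  shows "(\<exists>t\<in>set ts. P t) \<longleftrightarrow> int (length ts) * B + 1 \<le> (\<Sum>t\<leftarrow>ts. v t)"
proof
  assume "\<exists>t\<in>set ts. P t"
  then obtain t0 where t0: "t0 \<in> set ts" "P t0"
    by blast
  have "- B \<le> v t" if "t \<in> set ts" for t
  proof (cases "P t")
    case True
    have "0 \<le> 2 * int (length ts) * B"
      using B by simp
    with good[OF that True] B show ?thesis
      by linarith
  qed (use bad[OF that] in linarith)
  then have "(\<Sum>t\<leftarrow>remove1 t0 ts. - B) \<le> (\<Sum>t\<leftarrow>remove1 t0 ts. v t)"
    by (meson in_mono set_remove1_subset sum_list_mono)
  moreover have "(\<Sum>t\<leftarrow>remove1 t0 ts. - B) = - (int (length ts) - 1) * B"
  proof -
    have "1 \<le> length ts"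
      using t0 by (cases ts) auto
    then show ?thesis
      using t0 by (simp add: sum_list_triv length_remove1 of_nat_diff algebra_simps)
  qed
  ultimately show "int (length ts) * B + 1 \<le> (\<Sum>t\<leftarrow>ts. v t)"
    using sum_list_map_remove1[OF t0(1), of v] good[OF t0] B by (simp add: algebra_simps)
next
  assume threshold: "int (length ts) * B + 1 \<le> (\<Sum>t\<leftarrow>ts. v t)"
  show "\<exists>t\<in>set ts. P t"
  proof (rule ccontr)
    assume "\<not> (\<exists>t\<in>set ts. P t)"
    then have "(\<Sum>t\<leftarrow>ts. v t) \<le> (\<Sum>t\<leftarrow>ts. B)"
      using bad by (intro sum_list_mono) (meson abs_le_D1)
    with threshold show False
      by (simp add: sum_list_triv)
  qed
qed

lemma stem_detector_bounds:
  assumes "0 < N" "N \<le> (int r)\<^sup>2" "int (length ls) \<le> N"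
  shows "eval_term (T' \<union> set ls) x \<Longrightarrow>
      2 ^ s * N ^ (r * s) \<le> (if eval_term T' x then bpoly_eval (term_detector N r s ls) x else 0)"
    and "\<not> eval_term (T' \<union> set ls) x \<Longrightarrow>
      \<bar>if eval_term T' x then bpoly_eval (term_detector N r s ls) x else 0\<bar> \<le> N ^ (r * s)"
  using assms term_detector_eval_ge[of N r ls x s] abs_term_detector_eval_le[of N ls x r s]
  by (auto simp: eval_term_iff_lit_holds)

lemma ex_map_preimage:
  assumes "\<forall>y\<in>set ys. \<exists>x. f x = y \<and> P x"
  shows "\<exists>xs. map f xs = ys \<and> (\<forall>x\<in>set xs. P x)"
  using assms
proof (induction ys)
  case (Cons y ys)
  then obtain x xs where "f x = y" "P x" "map f xs = ys" "\<forall>x\<in>set xs. P x"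
    by auto
  then show ?case
    by (intro exI[of _ "x # xs"]) simp
qed simp

lemma fully_expressive_decomposition:
  assumes expressive: "fully_expressive k F ts" and terms: "\<forall>T\<in>set ts. is_term n T"
    and eligible: "\<forall>p\<in>F. eligible n p"
  obtains ds where "map (\<lambda>(T', R, ls). T' \<union> set ls) ds = ts"
    and "\<forall>(T', R, ls)\<in>set ds. (T', R) \<in> F \<and> finite R \<and> fst ` set ls \<subseteq> R \<and> length ls \<le> 2 * k"
proof -
  have decompose: "\<exists>d. (\<lambda>(T', R, ls). T' \<union> set ls) d = T
      \<and> (\<lambda>(T', R, ls). (T', R) \<in> F \<and> finite R \<and> fst ` set ls \<subseteq> R \<and> length ls \<le> 2 * k) d"
    if T: "T \<in> set ts" for T
  proof -
    obtain T' R where stem: "(T', R) \<in> F" "valid_stem k T' T" "vars (T - T') \<subseteq> R"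
      using expressive T unfolding fully_expressive_def by blast
    obtain ls where ls: "set ls = T - T'" "distinct ls"
      using terms T finite_distinct_list[of "T - T'"] by (auto simp: is_term_def)
    have "eligible n (T', R)"
      using eligible stem(1) by blast
    then have "finite R"
      unfolding eligible_def using finite_subset[of R "{..<n}"] by simp
    moreover have "length ls \<le> 2 * k"
      using stem(2) ls by (simp add: valid_stem_def distinct_card[symmetric])
    moreover have "T' \<union> set ls = T" "fst ` set ls \<subseteq> R"
      using stem ls by (auto simp: valid_stem_def vars_def)
    ultimately show ?thesis
      using stem(1) by (intro exI[of _ "(T', R, ls)"]) simp
  qed
  have "\<exists>ds. map (\<lambda>(T', R, ls). T' \<union> set ls) ds = ts
      \<and> (\<forall>(T', R, ls)\<in>set ds. (T', R) \<in> F \<and> finite R \<and> fst ` set ls \<subseteq> R \<and> length ls \<le> 2 * k)"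
    using decompose by (intro ex_map_preimage) simp
  then obtain ds where "map (\<lambda>(T', R, ls). T' \<union> set ls) ds = ts"
    and "\<forall>(T', R, ls)\<in>set ds. (T', R) \<in> F \<and> finite R \<and> fst ` set ls \<subseteq> R \<and> length ls \<le> 2 * k"
    by blast
  then show thesis
    by (rule that)
qed

definition stem_detector_list ::
    "int \<Rightarrow> nat \<Rightarrow> nat \<Rightarrow> (trm \<times> nat set \<times> lit list) list \<Rightarrow> aug_poly" where
  "stem_detector_list N r s ds = concat (map (\<lambda>(T', R, ls). bpoly_augment T' R (term_detector N r s ls)) ds)"

lemma stem_detector_list_monomials:
  assumes ds: "\<forall>(T', R, ls)\<in>set ds. (T', R) \<in> F \<and> fst ` set ls \<subseteq> R"
    and mem: "(c, T', R, S) \<in> set (stem_detector_list N r s ds)"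
  shows "(T', R) \<in> F \<and> S \<subseteq> R \<and> card S \<le> r * s"
proof -
  obtain T'' R'' ls where d: "(T'', R'', ls) \<in> set ds"
    and mem_d: "(c, T', R, S) \<in> set (bpoly_augment T'' R'' (term_detector N r s ls))"
    using mem unfolding stem_detector_list_def by auto
  have "bpoly_within R'' (r * s) (term_detector N r s ls)"
    using ds d by (auto intro: term_detector_within)
  with mem_d have "T' = T'' \<and> R = R'' \<and> S \<subseteq> R'' \<and> card S \<le> r * s"
    by (rule bpoly_augment_memD)
  with ds d show ?thesis
    by auto
qed

lemma stem_detector_list_weight:
  assumes "2 \<le> N" "\<forall>(T', R, ls)\<in>set ds. int (length ls) \<le> N"
  shows "(\<Sum>(c, m)\<leftarrow>stem_detector_list N r s ds. \<bar>c\<bar>) \<le> int (length ds) * (24 * N) ^ (r * s)"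
  using assms(2)
proof (induction ds)
  case (Cons d ds)
  obtain T' R ls where [simp]: "d = (T', R, ls)"
    by (cases d)
  have "bpoly_weight (term_detector N r s ls) \<le> (24 * N) ^ (r * s)"
    using Cons.prems assms(1) by (intro term_detector_weight) simp_all
  with Cons show ?case
    by (simp add: stem_detector_list_def bpoly_augment_weight algebra_simps)
qed (simp add: stem_detector_list_def)

lemma stem_detector_list_eval:
  assumes "\<forall>(T', R, ls)\<in>set ds. finite R \<and> fst ` set ls \<subseteq> R"
  shows "(\<Sum>(c, T', R, S)\<leftarrow>stem_detector_list N r s ds. c * aug_mono_val T' S x)
    = (\<Sum>(T', R, ls)\<leftarrow>ds. if eval_term T' x then bpoly_eval (term_detector N r s ls) x else 0)"
  using assms
proof (induction ds)
  case (Cons d ds)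
  obtain T' R ls where [simp]: "d = (T', R, ls)"
    by (cases d)
  have "bpoly_within R (r * s) (term_detector N r s ls)" "finite R"
    using Cons.prems by (simp_all add: term_detector_within)
  with Cons show ?case
    by (simp add: stem_detector_list_def bpoly_augment_eval)
qed (simp add: stem_detector_list_def)

lemma stem_detector_sum_threshold:
  assumes ds: "\<forall>(T', R, ls)\<in>set ds. int (length ls) \<le> N"
    and N: "2 \<le> N" "N \<le> (int r)\<^sup>2" and s: "2 * length ds \<le> 2 ^ s"
  shows "(\<exists>(T', R, ls)\<in>set ds. eval_term (T' \<union> set ls) x)
    \<longleftrightarrow> int (length ds) * N ^ (r * s) + 1
      \<le> (\<Sum>(T', R, ls)\<leftarrow>ds. if eval_term T' x then bpoly_eval (term_detector N r s ls) x else 0)"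
proof (rule dominant_summand_threshold)
  show "1 \<le> N ^ (r * s)"
    using N by simp
  fix d assume d: "d \<in> set ds"
  obtain T' R ls where [simp]: "d = (T', R, ls)"
    by (cases d)
  have len: "int (length ls) \<le> N"
    using ds d by auto
  have "int (2 * length ds) \<le> int (2 ^ s)"
    using s by (simp only: of_nat_le_iff)
  then have "2 * int (length ds) * N ^ (r * s) \<le> 2 ^ s * N ^ (r * s)"
    using N by (simp add: mult_right_mono)
  also have "\<dots> \<le> (if eval_term T' x then bpoly_eval (term_detector N r s ls) x else 0)"
    if "eval_term (T' \<union> set ls) x"
    using stem_detector_bounds(1)[OF _ N(2) len that] N(1) by simp
  finally show "(\<lambda>(T', R, ls). eval_term (T' \<union> set ls) x) d \<Longrightarrow> 2 * int (length ds) * N ^ (r * s)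
      \<le> (\<lambda>(T', R, ls). if eval_term T' x then bpoly_eval (term_detector N r s ls) x else 0) d"
    by simp
  show "\<not> (\<lambda>(T', R, ls). eval_term (T' \<union> set ls) x) d \<Longrightarrow>
      \<bar>(\<lambda>(T', R, ls). if eval_term T' x then bpoly_eval (term_detector N r s ls) x else 0) d\<bar> \<le> N ^ (r * s)"
    using stem_detector_bounds(2)[OF _ N(2) len] N(1) by simp
qed

lemma decomposed_dnf_aug_PTF:
  assumes ds: "\<forall>(T', R, ls)\<in>set ds. (T', R) \<in> F \<and> finite R \<and> fst ` set ls \<subseteq> R \<and> int (length ls) \<le> N"
    and N: "2 \<le> N" "N \<le> (int r)\<^sup>2" and s: "2 * length ds \<le> 2 ^ s"
  shows "aug_PTF F (r * s) (real (length ds) * real_of_int ((24 * N) ^ (r * s)))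
    (\<lambda>x. \<exists>(T', R, ls)\<in>set ds. eval_term (T' \<union> set ls) x)"
proof (rule aug_PTF_of_list[where L = "stem_detector_list N r s ds" and \<theta> = "real (length ds) * N ^ (r * s) + 1"])
  have "\<forall>(T', R, ls)\<in>set ds. (T', R) \<in> F \<and> fst ` set ls \<subseteq> R"
    using ds by (simp add: case_prod_beta)
  then show "\<forall>(c, T', R, S)\<in>set (stem_detector_list N r s ds). (T', R) \<in> F \<and> S \<subseteq> R \<and> card S \<le> r * s"
    by (auto dest: stem_detector_list_monomials)
  have lengths: "\<forall>(T', R, ls)\<in>set ds. int (length ls) \<le> N"
    using ds by (simp add: case_prod_beta)
  then have "(\<Sum>(c, m)\<leftarrow>stem_detector_list N r s ds. \<bar>c\<bar>) \<le> int (length ds) * (24 * N) ^ (r * s)"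
    using N(1) by (intro stem_detector_list_weight)
  then have "real_of_int (\<Sum>(c, m)\<leftarrow>stem_detector_list N r s ds. \<bar>c\<bar>)
      \<le> real_of_int (int (length ds) * (24 * N) ^ (r * s))"
    by (simp only: of_int_le_iff)
  then show "real_of_int (\<Sum>(c, m)\<leftarrow>stem_detector_list N r s ds. \<bar>c\<bar>)
      \<le> real (length ds) * real_of_int ((24 * N) ^ (r * s))"
    by simp
  have "\<forall>(T', R, ls)\<in>set ds. finite R \<and> fst ` set ls \<subseteq> R"
    using ds by (simp add: case_prod_beta)
  then have "(\<Sum>(c, T', R, S)\<leftarrow>stem_detector_list N r s ds. c * aug_mono_val T' S x)
      = (\<Sum>(T', R, ls)\<leftarrow>ds. if eval_term T' x then bpoly_eval (term_detector N r s ls) x else 0)" for x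
    by (rule stem_detector_list_eval)
  moreover have "real (length ds) * N ^ (r * s) + 1 = real_of_int (int (length ds) * N ^ (r * s) + 1)"
    by simp
  ultimately show "\<forall>x. (\<exists>(T', R, ls)\<in>set ds. eval_term (T' \<union> set ls) x)
      \<longleftrightarrow> real (length ds) * N ^ (r * s) + 1
        \<le> real_of_int (\<Sum>(c, T', R, S)\<leftarrow>stem_detector_list N r s ds. c * aug_mono_val T' S x)"
    using stem_detector_sum_threshold[OF lengths N s] by (simp only: of_int_le_iff simp_thms)
qed

lemma dnf_aug_PTF:
  assumes k: "length ts = k" and terms: "\<forall>T\<in>set ts. is_term n T"
    and eligible: "\<forall>p\<in>F. eligible n p" and expressive: "fully_expressive k F ts"
    and r: "2 * k \<le> r\<^sup>2" and s: "2 * k \<le> 2 ^ s"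
  shows "aug_PTF F (r * s) (real k * (48 * real k) ^ (r * s)) (dnf_eval ts)"
proof (cases "k = 0")
  case True
  then have "dnf_eval ts = (\<lambda>x. False)"
    using k by (auto simp: dnf_eval_def)
  with True show ?thesis
    by (intro aug_PTF_of_list[where L = "[]" and \<theta> = 1]) simp_all
next
  case False
  obtain ds where ts: "map (\<lambda>(T', R, ls). T' \<union> set ls) ds = ts"
    and ds: "\<forall>(T', R, ls)\<in>set ds. (T', R) \<in> F \<and> finite R \<and> fst ` set ls \<subseteq> R \<and> length ls \<le> 2 * k"
    using fully_expressive_decomposition[OF expressive terms eligible] by blast
  have "dnf_eval ts = (\<lambda>x. \<exists>(T', R, ls)\<in>set ds. eval_term (T' \<union> set ls) x)"
    unfolding dnf_eval_def ts[symmetric] by (simp add: case_prod_beta)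
  moreover have "length ds = k"
    using ts k by auto
  moreover have "\<forall>(T', R, ls)\<in>set ds. (T', R) \<in> F \<and> finite R \<and> fst ` set ls \<subseteq> R \<and> int (length ls) \<le> 2 * int k"
    using ds by (auto simp: case_prod_beta)
  moreover have "int (2 * k) \<le> int (r\<^sup>2)"
    using r by linarith
  ultimately show ?thesis
    using decomposed_dnf_aug_PTF[of ds F "2 * int k" r s] False s by simp
qed

section \<open>Degree and weight\<close>

lemma real_nat_ceiling_le: "0 \<le> x \<Longrightarrow> real (nat \<lceil>x\<rceil>) \<le> x + 1"
  using ceiling_correct[of x] by linarith

lemma le_nat_ceiling_sqrt_sq: "m \<le> (nat \<lceil>sqrt (real m)\<rceil>)\<^sup>2"
proof -
  have "sqrt (real m) ^ 2 \<le> real (nat \<lceil>sqrt (real m)\<rceil>) ^ 2"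
    by (intro power_mono real_nat_ceiling_ge) simp
  then have "real m \<le> real ((nat \<lceil>sqrt (real m)\<rceil>)\<^sup>2)"
    by (simp only: real_sqrt_pow2 of_nat_0_le_iff of_nat_power)
  then show ?thesis
    by (simp only: of_nat_le_iff)
qed

lemma le_two_power_nat_ceiling_log: "m \<le> 2 ^ nat \<lceil>log 2 (real m)\<rceil>"
proof (cases "m = 0")
  case False
  then have "real m = 2 powr log 2 (real m)"
    by simp
  also have "\<dots> \<le> 2 powr real (nat \<lceil>log 2 (real m)\<rceil>)"
    by (intro powr_mono real_nat_ceiling_ge) simp
  also have "\<dots> = 2 ^ nat \<lceil>log 2 (real m)\<rceil>"
    by (simp add: powr_realpow)
  finally show ?thesis
    by (simp flip: of_nat_le_iff)
qed simp

lemma degree_bound: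
  "real (nat \<lceil>sqrt (real (2 * k))\<rceil> * nat \<lceil>log 2 (real (2 * k))\<rceil>)
    \<le> 9 * sqrt (real k) * log 2 (real k + 1)"
proof (cases "k = 0")
  case False
  have "sqrt (real (2 * k)) \<le> 2 * sqrt (real k)"
    using sqrt2_less_2 by (simp add: real_sqrt_mult mult_right_mono)
  moreover have "1 \<le> sqrt (real k)"
    using False by simp
  ultimately have r: "real (nat \<lceil>sqrt (real (2 * k))\<rceil>) \<le> 3 * sqrt (real k)"
    using real_nat_ceiling_le[of "sqrt (real (2 * k))"] by linarith
  have "log 2 (real (2 * k)) \<le> 1 + log 2 (real k + 1)"
    using False by (simp add: log_mult)
  moreover have "1 \<le> log 2 (real k + 1)" "0 \<le> log 2 (real (2 * k))"
    using False by simp_all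
  ultimately have s: "real (nat \<lceil>log 2 (real (2 * k))\<rceil>) \<le> 3 * log 2 (real k + 1)"
    using real_nat_ceiling_le[of "log 2 (real (2 * k))"] by linarith
  show ?thesis
    using mult_mono[OF r s] by simp
qed simp

lemma weight_bound:
  assumes d: "real d \<le> 9 * sqrt (real k) * log 2 (real k + 1)"
  shows "real k * (48 * real k) ^ d \<le> 2 powr (64 * sqrt (real k) * (log 2 (real k + 1))\<^sup>2)"
proof (cases "k = 0")
  case False
  define L where "L = log 2 (real k + 1)"
  have L: "1 \<le> L" "real k + 1 = 2 powr L"
    using False by (simp_all add: L_def)
  have "2 ^ 6 \<le> (real k + 1) ^ 6"
    using False by (intro power_mono) auto
  from mult_right_mono[OF this, of "real k + 1"] have "48 * real k \<le> (real k + 1) ^ 7"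
    by (simp flip: power_Suc2)
  then have "real k * (48 * real k) ^ d \<le> (real k + 1) * ((real k + 1) ^ 7) ^ d"
    by (intro mult_mono power_mono) auto
  also have "\<dots> = (2 powr L) ^ (7 * d + 1)"
    by (simp add: L(2) power_mult)
  also have "\<dots> = 2 powr (real (7 * d + 1) * L)"
    by (rule powr_power) simp
  also have "\<dots> \<le> 2 powr (64 * sqrt (real k) * L\<^sup>2)"
  proof (intro powr_mono)
    have "1 \<le> sqrt (real k)"
      using False by simp
    then have "L \<le> sqrt (real k) * L"
      using L(1) by (simp add: mult_le_cancel_right1)
    also have "\<dots> \<le> sqrt (real k) * L\<^sup>2"
      using L(1) by (intro mult_left_mono) (simp_all add: power2_eq_square)
    finally have "L \<le> sqrt (real k) * L\<^sup>2" .
    moreover have "7 * real d * L \<le> 63 * sqrt (real k) * L\<^sup>2"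
      using d L(1) unfolding L_def by (simp add: power2_eq_square mult_right_mono)
    ultimately show "real (7 * d + 1) * L \<le> 64 * sqrt (real k) * L\<^sup>2"
      by (simp add: algebra_simps)
  qed simp
  finally show ?thesis
    by (simp add: L_def)
qed simp

theorem lemma5p5:
  shows "\<exists>C > 0. \<forall>(n::nat) (k::nat) (ts::trm list) (F::(trm \<times> nat set) set).
    length ts = k \<longrightarrow>
    (\<forall>T \<in> set ts. is_term n T) \<longrightarrow>
    (\<forall>p \<in> F. eligible n p) \<longrightarrow>
    (\<exists>R. ({}, R) \<in> F) \<longrightarrow>
    fully_expressive k F ts \<longrightarrow>
    (\<exists>(d::nat) (W::real).
       real d \<le> C * sqrt (real k) * log 2 (real k + 1) \<and>
       W \<le> 2 powr (C * sqrt (real k) * (log 2 (real k + 1))^2) \<and>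
       aug_PTF F d W (dnf_eval ts))"
proof (rule exI[of _ 64], intro conjI allI impI)
  fix n k ts F
  assume k: "length ts = k" and terms: "\<forall>T \<in> set ts. is_term n T"
    and eligible: "\<forall>p \<in> F. eligible n p" and "\<exists>R. ({}, R) \<in> F"
    and expressive: "fully_expressive k F ts"
  define r where "r = nat \<lceil>sqrt (real (2 * k))\<rceil>"
  define s where "s = nat \<lceil>log 2 (real (2 * k))\<rceil>"
  have PTF: "aug_PTF F (r * s) (real k * (48 * real k) ^ (r * s)) (dnf_eval ts)"
    unfolding r_def s_def
    by (rule dnf_aug_PTF[OF k terms eligible expressive le_nat_ceiling_sqrt_sq le_two_power_nat_ceiling_log])
  have d: "real (r * s) \<le> 9 * sqrt (real k) * log 2 (real k + 1)"
    unfolding r_def s_def by (rule degree_bound)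
  moreover have "0 \<le> sqrt (real k) * log 2 (real k + 1)"
    by simp
  ultimately have "real (r * s) \<le> 64 * sqrt (real k) * log 2 (real k + 1)"
    by linarith
  with PTF weight_bound[OF d]
  show "\<exists>d W. real d \<le> 64 * sqrt (real k) * log 2 (real k + 1)
      \<and> W \<le> 2 powr (64 * sqrt (real k) * (log 2 (real k + 1))\<^sup>2) \<and> aug_PTF F d W (dnf_eval ts)"
    by blast
qed simp

end
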